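(* Let $\widehat{\mathbf Y}$ be an optimal solution of the SDP, $\gamma=\|\widehat{\mathbf Y}-\mathbf Y^*\|_1$, and $S_4=\langle\widehat{\mathbf Y}-\mathbf Y^*,\mathbb E\,\mathbf H\mathbf H^\top\rangle$. For $a,b\in[k]$ let $T_{ab}=\sum_{i\in C^*_a,\,j\in C^*_b}(\widehat{\mathbf Y}-\mathbf Y^* )_{ij}$. Then \[ S_4=-\frac12\sum_{a\ne b}T_{ab}\Delta_{ab}^2\le-\frac14\Delta^2\gamma. \]
   Context: Model: integers $n\ge 4$, $k\ge 2$ with $k\mid n$; centers $\boldsymbol\mu_1,\dots,\boldsymbol\mu_k\in\mathbb R^d$; labels $\sigma^*:[n]\to[k]$ with clusters $C^*_a=\{i:\sigma^*(i)=a\}$ of size $n/k$; observations $\mathbf h_i=\boldsymbol\mu_{\sigma^*(i)}+\mathbf g_i$ with $\mathbf g_i$ independent, mean-zero sub-Gaussian random vectors. $\mathbf H\in\mathbb R^{n\times d}$ has $i$-th row $\mathbf h_i^\top$. $\Delta_{ab}=\|\boldsymbol\mu_a-\boldsymbol\mu_b\|_2$, $\Delta=\min_{a\ne b}\Delta_{ab}$. SDP: $A_{ij}=\|\mathbf h_i-\mathbf h_j\|_2^2$; $\widehat{\mathbf Y}$ minimizes $\langle\mathbf Y,\mathbf A\rangle$ subject to $\mathbf Y\mathbf 1_n=\frac nk\mathbf 1_n$, $\mathbf Y\succeq0$, $\mathrm{diag}(\mathbf Y)=\mathbf 1_n$, $\mathbf Y\ge0$. $Y^*_{ij}=\mathbb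 1\{\sigma^*(i)=\sigma^*(j)\}$; $\|\cdot\|_1$ entrywise $\ell_1$ norm. *)

theory Defs
  imports "HOL-Probability.Probability"
begin

text \<open>Indices: points are 0..<n, clusters are 0..<k. Matrices are functions
  nat => nat => real, only entries with indices below n matter.\<close>

definition subgaussian_vec :: "'a measure \<Rightarrow> ('a \<Rightarrow> real^'d) \<Rightarrow> bool" where
  "subgaussian_vec M X \<longleftrightarrow> (\<exists>K::real. \<forall>u::real^'d. norm u = 1 \<longrightarrow>
      (\<forall>l::real. integrable M (\<lambda>w. exp (l * (u \<bullet> X w))) \<and>
          (\<integral>w. exp (l * (u \<bullet> X w)) \<partial>M) \<le> exp (l\<^sup>2 * K\<^sup>2 / 2)))"

definition psd_mat :: "nat \<Rightarrow> (nat \<Rightarrow> nat \<Rightarrow> real) \<Rightarrow> bool" where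
  "psd_mat n Y \<longleftrightarrow> (\<forall>i<n. \<forall>j<n. Y i j = Y j i) \<and>
     (\<forall>x::nat \<Rightarrow> real. 0 \<le> (\<Sum>i<n. \<Sum>j<n. x i * Y i j * x j))"

definition sdp_feasible :: "nat \<Rightarrow> nat \<Rightarrow> (nat \<Rightarrow> nat \<Rightarrow> real) \<Rightarrow> bool" where
  "sdp_feasible n k Y \<longleftrightarrow>
     (\<forall>i<n. (\<Sum>j<n. Y i j) = real n / real k) \<and> psd_mat n Y \<and>
     (\<forall>i<n. Y i i = 1) \<and> (\<forall>i<n. \<forall>j<n. 0 \<le> Y i j)"

definition mat_inner :: "nat \<Rightarrow> (nat \<Rightarrow> nat \<Rightarrow> real) \<Rightarrow> (nat \<Rightarrow> nat \<Rightarrow> real) \<Rightarrow> real" where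
  "mat_inner n X Z = (\<Sum>i<n. \<Sum>j<n. X i j * Z i j)"

definition sdp_optimal :: "nat \<Rightarrow> nat \<Rightarrow> (nat \<Rightarrow> nat \<Rightarrow> real) \<Rightarrow> (nat \<Rightarrow> nat \<Rightarrow> real) \<Rightarrow> bool" where
  "sdp_optimal n k A Y \<longleftrightarrow> sdp_feasible n k Y \<and>
     (\<forall>Y'. sdp_feasible n k Y' \<longrightarrow> mat_inner n Y A \<le> mat_inner n Y' A)"

end

theory Submission
  imports Defs
begin

text \<open>For \<open>i \<noteq> j\<close> the independent centred noise drops out of \<open>E \<langle>h\<^sub>i, h\<^sub>j\<rangle>\<close>, and the diagonal of
  \<open>D = Y - Y\<^sup>*\<close> vanishes, so \<open>S\<^sub>4\<close> is the pairing of \<open>D\<close> with the Gram matrix of the centres. Since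
  \<open>Y\<close> and \<open>Y\<^sup>*\<close> have the same row sums, \<open>D\<close> has zero row and column sums, so this Gram matrix may
  be replaced by \<open>-1/2\<close> times the squared distances, which are constant on cluster blocks and vanish on
  diagonal blocks. For the inequality: \<open>D\<close> is nonnegative off the diagonal blocks (\<open>Y \<ge> 0\<close>) and
  nonpositive on them (\<open>Y \<le> 1\<close> by positive semidefiniteness), and its entries sum to zero, so
  \<open>\<gamma>\<close> is twice the total mass of the off-diagonal blocks.\<close>

lemma (in prob_space) indep_vars_inner_mean_zero:
  fixes X :: "'i \<Rightarrow> 'a \<Rightarrow> 'b::euclidean_space"
  assumes indep: "indep_vars (\<lambda>_. borel) X I" and "i \<in> I" "j \<in> I" "i \<noteq> j"
    and int: "integrable M (X i)" "integrable M (X j)"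
    and mean: "expectation (X i) = 0" "expectation (X j) = 0"
  shows "integrable M (\<lambda>\<omega>. X i \<omega> \<bullet> X j \<omega>)" and "expectation (\<lambda>\<omega>. X i \<omega> \<bullet> X j \<omega>) = 0"
proof -
  have coord: "integrable M (\<lambda>\<omega>. (X i \<omega> \<bullet> b) * (X j \<omega> \<bullet> b)) \<and>
      expectation (\<lambda>\<omega>. (X i \<omega> \<bullet> b) * (X j \<omega> \<bullet> b)) = 0" for b
  proof -
    have "indep_vars (\<lambda>_. borel) X {i, j}"
      using indep_vars_subset[OF indep] \<open>i \<in> I\<close> \<open>j \<in> I\<close> by simp
    then have ind: "indep_vars (\<lambda>_. borel) (\<lambda>l \<omega>. X l \<omega> \<bullet> b) {i, j}"
      by (rule indep_vars_compose2) simp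
    have int_b: "integrable M (\<lambda>\<omega>. X l \<omega> \<bullet> b)" if "l \<in> {i, j}" for l
      using int that by auto
    have "integrable M (\<lambda>\<omega>. \<Prod>l\<in>{i, j}. X l \<omega> \<bullet> b)"
      by (rule indep_vars_integrable[OF _ ind int_b]) auto
    moreover have "expectation (\<lambda>\<omega>. \<Prod>l\<in>{i, j}. X l \<omega> \<bullet> b)
        = (\<Prod>l\<in>{i, j}. expectation (\<lambda>\<omega>. X l \<omega> \<bullet> b))"
      by (rule indep_vars_lebesgue_integral[OF _ ind int_b]) auto
    ultimately show ?thesis
      using \<open>i \<noteq> j\<close> int mean by simp
  qed
  have "(\<lambda>\<omega>. X i \<omega> \<bullet> X j \<omega>) = (\<lambda>\<omega>. \<Sum>b\<in>Basis. (X i \<omega> \<bullet> b) * (X j \<omega> \<bullet> b))"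
    by (rule ext) (rule euclidean_inner)
  then show "integrable M (\<lambda>\<omega>. X i \<omega> \<bullet> X j \<omega>)" and "expectation (\<lambda>\<omega>. X i \<omega> \<bullet> X j \<omega>) = 0"
    using coord by simp_all
qed

lemma (in prob_space) indep_vars_inner_shift_expectation:
  fixes X :: "'i \<Rightarrow> 'a \<Rightarrow> 'b::euclidean_space"
  assumes "indep_vars (\<lambda>_. borel) X I" "i \<in> I" "j \<in> I" "i \<noteq> j"
    and "integrable M (X i)" "integrable M (X j)"
    and "expectation (X i) = 0" "expectation (X j) = 0"
  shows "expectation (\<lambda>\<omega>. (a + X i \<omega>) \<bullet> (b + X j \<omega>)) = a \<bullet> b"
proof -
  have "(\<lambda>\<omega>. (a + X i \<omega>) \<bullet> (b + X j \<omega>))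
      = (\<lambda>\<omega>. a \<bullet> b + (a \<bullet> X j \<omega> + (X i \<omega> \<bullet> b + X i \<omega> \<bullet> X j \<omega>)))"
    by (simp add: inner_add_left inner_add_right algebra_simps)
  then show ?thesis
    using assms indep_vars_inner_mean_zero[OF assms] by (simp add: prob_space)
qed

lemma (in prob_space) mat_inner_expected_gram:
  fixes X :: "nat \<Rightarrow> 'a \<Rightarrow> 'b::euclidean_space"
  assumes "indep_vars (\<lambda>_. borel) X {..<n}"
    and "\<forall>i<n. integrable M (X i) \<and> expectation (X i) = 0" and "\<forall>i<n. D i i = 0"
  shows "mat_inner n D (\<lambda>i j. expectation (\<lambda>\<omega>. (c i + X i \<omega>) \<bullet> (c j + X j \<omega>)))
    = (\<Sum>i<n. \<Sum>j<n. D i j * (c i \<bullet> c j))"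
  unfolding mat_inner_def
proof (intro sum.cong refl)
  fix i j assume "i \<in> {..<n}" "j \<in> {..<n}"
  then show "D i j * expectation (\<lambda>\<omega>. (c i + X i \<omega>) \<bullet> (c j + X j \<omega>)) = D i j * (c i \<bullet> c j)"
    using assms by (cases "i = j") (auto intro: indep_vars_inner_shift_expectation)
qed

lemma psd_mat_entry_le:
  assumes "psd_mat n Y" "i < n" "j < n"
  shows "2 * Y i j \<le> Y i i + Y j j"
proof -
  define x :: "nat \<Rightarrow> real" where "x l = of_bool (l = i) - of_bool (l = j)" for l
  have x_sum: "(\<Sum>l<n. x l * c l) = c i - c j" for c :: "nat \<Rightarrow> real"
    using assms(2,3) by (simp add: x_def left_diff_distrib sum_subtractf)
  have "0 \<le> (\<Sum>l<n. \<Sum>m<n. x l * Y l m * x m)"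
    using assms(1) unfolding psd_mat_def by blast
  also have "\<dots> = (\<Sum>l<n. x l * (\<Sum>m<n. x m * Y l m))"
    by (simp add: sum_distrib_left mult.commute mult.left_commute)
  also have "\<dots> = Y i i + Y j j - Y i j - Y j i"
    unfolding x_sum by simp
  finally show ?thesis
    using assms unfolding psd_mat_def by simp
qed

lemma sdp_feasible_entry_bounds:
  assumes "sdp_feasible n k Y" "i < n" "j < n"
  shows "0 \<le> Y i j" and "Y i j \<le> 1"
  using assms psd_mat_entry_le[of n Y i j] unfolding sdp_feasible_def by auto

lemma sum_same_cluster_indicator:
  assumes "\<forall>a<k. card {i. i < n \<and> \<sigma> i = a} = n div k" "k dvd n" "\<sigma> i < k"
  shows "(\<Sum>j<n. if \<sigma> i = \<sigma> j then 1 else 0 :: real) = real n / real k"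
proof -
  have "(\<Sum>j<n. if \<sigma> i = \<sigma> j then 1 else 0 :: real) = real (card {j. j < n \<and> \<sigma> j = \<sigma> i})"
    by (simp add: sum.If_cases Int_def eq_commute conj_commute)
  then show ?thesis
    using assms by (simp add: real_of_nat_div)
qed

lemma sdp_feasible_cluster_deviation:
  fixes Y :: "nat \<Rightarrow> nat \<Rightarrow> real" and \<sigma> :: "nat \<Rightarrow> nat"
  defines "D \<equiv> \<lambda>i j. Y i j - (if \<sigma> i = \<sigma> j then 1 else 0)"
  assumes "sdp_feasible n k Y" "\<forall>i<n. \<sigma> i < k"
    and "\<forall>a<k. card {i. i < n \<and> \<sigma> i = a} = n div k" "k dvd n"
  shows "\<forall>i<n. (\<Sum>j<n. D i j) = 0" and "\<forall>j<n. (\<Sum>i<n. D i j) = 0" and "\<forall>i<n. D i i = 0"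
proof -
  show rows: "\<forall>i<n. (\<Sum>j<n. D i j) = 0"
    using assms sum_same_cluster_indicator[of k n \<sigma>]
    unfolding D_def sdp_feasible_def by (simp add: sum_subtractf)
  have "D i j = D j i" if "i < n" "j < n" for i j
    using assms(2) that unfolding D_def sdp_feasible_def psd_mat_def by auto
  then show "\<forall>j<n. (\<Sum>i<n. D i j) = 0"
    using rows by (metis (no_types, lifting) lessThan_iff sum.cong)
  show "\<forall>i<n. D i i = 0"
    using assms(2) unfolding D_def sdp_feasible_def by simp
qed

lemma sum_inner_eq_neg_half_sum_dist_sq:
  fixes x :: "'i \<Rightarrow> 'a::real_inner" and D :: "'i \<Rightarrow> 'i \<Rightarrow> real"
  assumes rows: "\<forall>i\<in>A. (\<Sum>j\<in>A. D i j) = 0" and cols: "\<forall>j\<in>A. (\<Sum>i\<in>A. D i j) = 0"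
  shows "(\<Sum>i\<in>A. \<Sum>j\<in>A. D i j * (x i \<bullet> x j))
    = - (1/2) * (\<Sum>i\<in>A. \<Sum>j\<in>A. D i j * (dist (x i) (x j))\<^sup>2)"
proof -
  have expand: "D i j * (dist (x i) (x j))\<^sup>2
      = D i j * (x i \<bullet> x i) + D i j * (x j \<bullet> x j) - 2 * (D i j * (x i \<bullet> x j))" for i j
    by (simp add: dist_norm power2_norm_eq_inner inner_diff_left inner_diff_right inner_commute
        algebra_simps)
  have row_term: "(\<Sum>i\<in>A. \<Sum>j\<in>A. D i j * (x i \<bullet> x i)) = 0"
    using rows by (simp add: sum_distrib_right[symmetric])
  have col_term: "(\<Sum>i\<in>A. \<Sum>j\<in>A. D i j * (x j \<bullet> x j)) = 0"
    using cols by (subst sum.swap) (simp add: sum_distrib_right[symmetric])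
  show ?thesis
    unfolding expand by (simp add: sum.distrib sum_subtractf sum_distrib_left[symmetric] row_term col_term)
qed

lemma sum_group_by_cluster:
  fixes h :: "nat \<Rightarrow> 'b::comm_monoid_add" and \<sigma> :: "nat \<Rightarrow> nat"
  assumes "\<forall>i<n. \<sigma> i < k"
  shows "(\<Sum>i<n. h i) = (\<Sum>a<k. \<Sum>i\<in>{i. i < n \<and> \<sigma> i = a}. h i)"
proof -
  have "(\<Sum>a<k. \<Sum>i\<in>{i\<in>{..<n}. \<sigma> i = a}. h i) = (\<Sum>i<n. h i)"
    using assms by (intro sum.group) auto
  then show ?thesis
    by simp
qed

lemma sum_by_cluster_blocks:
  fixes D f :: "nat \<Rightarrow> nat \<Rightarrow> real"
  assumes "\<forall>i<n. \<sigma> i < k"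
  shows "(\<Sum>i<n. \<Sum>j<n. D i j * f (\<sigma> i) (\<sigma> j))
    = (\<Sum>a<k. \<Sum>b<k. (\<Sum>i\<in>{i. i < n \<and> \<sigma> i = a}. \<Sum>j\<in>{j. j < n \<and> \<sigma> j = b}. D i j) * f a b)"
proof -
  have "(\<Sum>i<n. \<Sum>j<n. D i j * f (\<sigma> i) (\<sigma> j))
      = (\<Sum>a<k. \<Sum>i\<in>{i. i < n \<and> \<sigma> i = a}. \<Sum>b<k. \<Sum>j\<in>{j. j < n \<and> \<sigma> j = b}. D i j * f (\<sigma> i) (\<sigma> j))"
    by (simp only: sum_group_by_cluster[OF assms])
  also have "\<dots> = (\<Sum>a<k. \<Sum>i\<in>{i. i < n \<and> \<sigma> i = a}. \<Sum>b<k. \<Sum>j\<in>{j. j < n \<and> \<sigma> j = b}. D i j * f a b)"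
    by (intro sum.cong refl) simp
  also have "\<dots> = (\<Sum>a<k. \<Sum>b<k. \<Sum>i\<in>{i. i < n \<and> \<sigma> i = a}. \<Sum>j\<in>{j. j < n \<and> \<sigma> j = b}. D i j * f a b)"
    by (intro sum.cong refl sum.swap)
  also have "\<dots> = (\<Sum>a<k. \<Sum>b<k. (\<Sum>i\<in>{i. i < n \<and> \<sigma> i = a}. \<Sum>j\<in>{j. j < n \<and> \<sigma> j = b}. D i j) * f a b)"
    by (simp add: sum_distrib_right)
  finally show ?thesis .
qed

lemma sum_by_cluster_offdiag_blocks:
  fixes D f :: "nat \<Rightarrow> nat \<Rightarrow> real"
  assumes "\<forall>i<n. \<sigma> i < k" "\<forall>a. f a a = 0"
  shows "(\<Sum>i<n. \<Sum>j<n. D i j * f (\<sigma> i) (\<sigma> j))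
    = (\<Sum>a<k. \<Sum>b\<in>{b. b < k \<and> b \<noteq> a}.
         (\<Sum>i\<in>{i. i < n \<and> \<sigma> i = a}. \<Sum>j\<in>{j. j < n \<and> \<sigma> j = b}. D i j) * f a b)"
  unfolding sum_by_cluster_blocks[OF assms(1)]
  by (intro sum.cong refl sum.mono_neutral_cong_right) (use assms(2) in auto)

lemma sum_abs_cluster_deviation:
  fixes Y :: "nat \<Rightarrow> nat \<Rightarrow> real" and \<sigma> :: "nat \<Rightarrow> nat"
  defines "D \<equiv> \<lambda>i j. Y i j - (if \<sigma> i = \<sigma> j then 1 else 0)"
  assumes bounds: "\<forall>i<n. \<forall>j<n. 0 \<le> Y i j \<and> Y i j \<le> 1" and rows: "\<forall>i<n. (\<Sum>j<n. D i j) = 0"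
  shows "(\<Sum>i<n. \<Sum>j<n. \<bar>D i j\<bar>) = 2 * (\<Sum>i<n. \<Sum>j<n. D i j * (if \<sigma> i = \<sigma> j then 0 else 1))"
proof -
  have "\<bar>D i j\<bar> = 2 * (D i j * (if \<sigma> i = \<sigma> j then 0 else 1)) - D i j" if "i < n" "j < n" for i j
    using bounds that unfolding D_def by auto
  then have "(\<Sum>i<n. \<Sum>j<n. \<bar>D i j\<bar>)
      = 2 * (\<Sum>i<n. \<Sum>j<n. D i j * (if \<sigma> i = \<sigma> j then 0 else 1)) - (\<Sum>i<n. \<Sum>j<n. D i j)"
    by (simp add: sum_subtractf sum_distrib_left)
  then show ?thesis
    using rows by simp
qed

lemma min_dist_sq_mul_sum_le:
  fixes \<mu> :: "nat \<Rightarrow> 'a::metric_space" and T :: "nat \<Rightarrow> nat \<Rightarrow> real"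
  assumes "\<forall>a<k. \<forall>b<k. a \<noteq> b \<longrightarrow> 0 \<le> T a b"
  shows "(Min {dist (\<mu> a) (\<mu> b) | a b. a < k \<and> b < k \<and> a \<noteq> b})\<^sup>2 * (\<Sum>a<k. \<Sum>b\<in>{b. b < k \<and> b \<noteq> a}. T a b)
    \<le> (\<Sum>a<k. \<Sum>b\<in>{b. b < k \<and> b \<noteq> a}. T a b * (dist (\<mu> a) (\<mu> b))\<^sup>2)"
  unfolding sum_distrib_left
proof (intro sum_mono)
  fix a b assume ab: "a \<in> {..<k}" "b \<in> {b. b < k \<and> b \<noteq> a}"
  define S where "S = {dist (\<mu> a) (\<mu> b) | a b. a < k \<and> b < k \<and> a \<noteq> b}"
  have "S \<subseteq> (\<lambda>(a, b). dist (\<mu> a) (\<mu> b)) ` ({..<k} \<times> {..<k})"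
    unfolding S_def by auto
  then have "finite S"
    by (rule finite_subset) auto
  moreover have "dist (\<mu> a) (\<mu> b) \<in> S"
    using ab unfolding S_def by blast
  moreover have "\<forall>d\<in>S. 0 \<le> d"
    unfolding S_def by auto
  ultimately have "0 \<le> Min S" "Min S \<le> dist (\<mu> a) (\<mu> b)"
    by (auto intro: Min_in)
  then have "(Min S)\<^sup>2 \<le> (dist (\<mu> a) (\<mu> b))\<^sup>2"
    by (simp add: power_mono)
  then show "(Min S)\<^sup>2 * T a b \<le> T a b * (dist (\<mu> a) (\<mu> b))\<^sup>2"
    using assms ab by (simp add: mult.commute mult_left_mono)
qed

theorem proposition9:
  fixes M :: "'w measure" and n k :: nat and \<mu> :: "nat \<Rightarrow> real^'d"
    and \<sigma> :: "nat \<Rightarrow> nat" and g :: "nat \<Rightarrow> 'w \<Rightarrow> real^'d"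
    and \<omega> :: 'w and Yh :: "nat \<Rightarrow> nat \<Rightarrow> real"
  assumes "prob_space M"
    and "n \<ge> 4" and "k \<ge> 2" and "k dvd n"
    and "\<forall>i<n. \<sigma> i < k"
    and "\<forall>a<k. card {i. i < n \<and> \<sigma> i = a} = n div k"
    and "\<forall>i<n. g i \<in> borel_measurable M"
    and "prob_space.indep_vars M (\<lambda>_. borel) g {..<n}"
    and "\<forall>i<n. integrable M (g i) \<and> (\<integral>w. g i w \<partial>M) = 0"
    and "\<forall>i<n. subgaussian_vec M (g i)"
    and "\<omega> \<in> space M"
    and "sdp_optimal n k (\<lambda>i j. (norm ((\<mu> (\<sigma> i) + g i \<omega>) - (\<mu> (\<sigma> j) + g j \<omega>)))\<^sup>2) Yh"
  shows
   "let Ystar = (\<lambda>i j. if \<sigma> i = \<sigma> j then 1 else 0 :: real);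
        D = (\<lambda>i j. Yh i j - Ystar i j);
        \<gamma> = (\<Sum>i<n. \<Sum>j<n. \<bar>D i j\<bar>);
        EHH = (\<lambda>i j. \<integral>w. (\<mu> (\<sigma> i) + g i w) \<bullet> (\<mu> (\<sigma> j) + g j w) \<partial>M);
        S4 = mat_inner n D EHH;
        T = (\<lambda>a b. \<Sum>i\<in>{i. i < n \<and> \<sigma> i = a}. \<Sum>j\<in>{j. j < n \<and> \<sigma> j = b}. D i j);
        Dab = (\<lambda>a b. dist (\<mu> a) (\<mu> b));
        Delta = Min {Dab a b | a b. a < k \<and> b < k \<and> a \<noteq> b}
    in S4 = - (1/2) * (\<Sum>a<k. \<Sum>b\<in>{b. b < k \<and> b \<noteq> a}. T a b * (Dab a b)\<^sup>2)
       \<and> - (1/2) * (\<Sum>a<k. \<Sum>b\<in>{b. b < k \<and> b \<noteq> a}. T a b * (Dab a b)\<^sup>2)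
           \<le> - (1/4) * Delta\<^sup>2 * \<gamma>"
proof -
  interpret prob_space M by fact
  define D where "D i j = Yh i j - (if \<sigma> i = \<sigma> j then 1 else 0)" for i j
  define T where "T a b = (\<Sum>i\<in>{i. i < n \<and> \<sigma> i = a}. \<Sum>j\<in>{j. j < n \<and> \<sigma> j = b}. D i j)" for a b
  define X where "X = (\<Sum>a<k. \<Sum>b\<in>{b. b < k \<and> b \<noteq> a}. T a b * (dist (\<mu> a) (\<mu> b))\<^sup>2)"
  have feas: "sdp_feasible n k Yh"
    using assms(12) unfolding sdp_optimal_def by blast
  have bounds: "\<forall>i<n. \<forall>j<n. 0 \<le> Yh i j \<and> Yh i j \<le> 1"
    using sdp_feasible_entry_bounds[OF feas] by blast
  have rows: "\<forall>i<n. (\<Sum>j<n. D i j) = 0" and cols: "\<forall>j<n. (\<Sum>i<n. D i j) = 0"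
    and diag: "\<forall>i<n. D i i = 0"
    using sdp_feasible_cluster_deviation[OF feas assms(5,6,4)] unfolding D_def by auto
  have "mat_inner n D (\<lambda>i j. expectation (\<lambda>w. (\<mu> (\<sigma> i) + g i w) \<bullet> (\<mu> (\<sigma> j) + g j w)))
      = (\<Sum>i<n. \<Sum>j<n. D i j * (\<mu> (\<sigma> i) \<bullet> \<mu> (\<sigma> j)))" (is "?S4 = _")
    using mat_inner_expected_gram[OF assms(8)] assms(9) diag by simp
  also have "\<dots> = - (1/2) * X"
    using sum_inner_eq_neg_half_sum_dist_sq[of "{..<n}" D "\<lambda>i. \<mu> (\<sigma> i)"] rows cols
      sum_by_cluster_offdiag_blocks[OF assms(5), of "\<lambda>a b. (dist (\<mu> a) (\<mu> b))\<^sup>2" D]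
    unfolding X_def T_def by simp
  finally have S4: "?S4 = - (1/2) * X" .
  have "(\<Sum>i<n. \<Sum>j<n. \<bar>D i j\<bar>) = 2 * (\<Sum>a<k. \<Sum>b\<in>{b. b < k \<and> b \<noteq> a}. T a b)"
    using sum_abs_cluster_deviation[of n Yh \<sigma>] bounds rows
      sum_by_cluster_offdiag_blocks[OF assms(5), of "\<lambda>a b. if a = b then 0 else 1" D]
    unfolding D_def T_def by simp
  moreover have "\<forall>a<k. \<forall>b<k. a \<noteq> b \<longrightarrow> 0 \<le> T a b"
    using bounds unfolding T_def D_def by (auto intro!: sum_nonneg)
  ultimately have "- (1/2) * X \<le> - (1/4) * (Min {dist (\<mu> a) (\<mu> b) | a b. a < k \<and> b < k \<and> a \<noteq> b})\<^sup>2
      * (\<Sum>i<n. \<Sum>j<n. \<bar>D i j\<bar>)"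
    using min_dist_sq_mul_sum_le[of k T \<mu>] unfolding X_def by (simp add: mult.commute)
  with S4 show ?thesis
    unfolding Let_def D_def T_def X_def by simp
qed

end
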